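(* Let $X$ be a graph on vertex set $V$, $|V|=n$, which may have loops (no multiple edges), with vertex degrees $d_i$ (each loop counted once), and let $\tau$ be the least eigenvalue of its adjacency matrix $A$. Let $S$ be an independent set of size $s\ge1$ containing $s_1$ vertices with loops, and put $\bar d_S=\frac1s\sum_{i\in S}d_i$, $k_S=2\bar d_S-\frac1n\sum_{i\in V}d_i$. If $k_S>\tau$, then \[ s\le n\,\frac{-\tau+\sqrt{\tau^2+4s_1\frac{k_S-\tau}{n}}}{2(k_S-\tau)}. \]
   Context: The adjacency matrix has $A_{ii}=1$ if vertex $i$ carries a loop and $0$ otherwise, and $A_{ij}=1$ for adjacent distinct $i,j$. An independent set is a set of vertices no two distinct members of which are adjacent; looped vertices may belong to it. *)

theory Defs
  imports "HOL-Analysis.Analysis"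
begin

text \<open>A graph possibly with loops on the finite vertex type 'n, given by a symmetric
  relation E; E i i means vertex i carries a loop.\<close>

definition adj_matrix :: "('n::finite \<Rightarrow> 'n \<Rightarrow> bool) \<Rightarrow> real^'n^'n" where
  "adj_matrix E = (\<chi> i j. if E i j then 1 else 0)"

definition degree :: "('n::finite \<Rightarrow> 'n \<Rightarrow> bool) \<Rightarrow> 'n \<Rightarrow> nat" where
  "degree E i = card {j. E i j}"

definition independent_set :: "('n \<Rightarrow> 'n \<Rightarrow> bool) \<Rightarrow> 'n set \<Rightarrow> bool" where
  "independent_set E S \<longleftrightarrow> (\<forall>i\<in>S. \<forall>j\<in>S. i \<noteq> j \<longrightarrow> \<not> E i j)"

definition is_eigenvalue :: "real^'n^'n \<Rightarrow> real \<Rightarrow> bool" where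
  "is_eigenvalue A c \<longleftrightarrow> (\<exists>v. v \<noteq> 0 \<and> A *v v = c *\<^sub>R v)"

definition least_eigenvalue :: "real^'n^'n \<Rightarrow> real" where
  "least_eigenvalue A = Min {c. is_eigenvalue A c}"

end

theory Submission
  imports Defs
begin

text \<open>Rayleigh's principle gives \<open>x \<bullet> (A *v x) \<ge> \<tau> * (x \<bullet> x)\<close> for every real vector \<open>x\<close>.
  Take \<open>x = \<chi>\<^sub>S - (s/n) *\<^sub>R 1\<close>. For an independent set \<open>S\<close>, \<open>\<chi>\<^sub>S \<bullet> (A *v \<chi>\<^sub>S)\<close> counts
  only the loops in \<open>S\<close>, while \<open>\<chi>\<^sub>S \<bullet> (A *v 1)\<close> and \<open>1 \<bullet> (A *v 1)\<close> are the degree sums over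
  \<open>S\<close> and over \<open>V\<close>. The resulting inequality is quadratic in \<open>s/n\<close>, with leading
  coefficient \<open>k\<^sub>S - \<tau> > 0\<close>, and bounding \<open>s/n\<close> by its larger root gives the claim.\<close>

lemma quadratic_le_imp_le_root:
  fixes a b c x :: real
  assumes "a > 0" and "a * x\<^sup>2 + b * x \<le> c"
  shows "x \<le> (- b + sqrt (b\<^sup>2 + 4 * a * c)) / (2 * a)"
proof -
  have "(2 * a * x + b)\<^sup>2 = 4 * a * (a * x\<^sup>2 + b * x) + b\<^sup>2"
    by (simp add: power2_eq_square algebra_simps)
  also have "\<dots> \<le> b\<^sup>2 + 4 * a * c"
    using assms by simp
  finally have "2 * a * x + b \<le> sqrt (b\<^sup>2 + 4 * a * c)"
    by (rule real_le_rsqrt)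
  thus ?thesis
    using assms(1) by (simp add: field_simps)
qed

lemma quadratic_nonneg_imp_linear_coeff_zero:
  fixes a b :: real
  assumes nonneg: "\<And>t. 0 \<le> a * t + b * t\<^sup>2"
  shows "a = 0"
proof (rule ccontr)
  assume "a \<noteq> 0"
  define t where "t = - a / (\<bar>b\<bar> + 1)"
  have "t \<noteq> 0" and a_eq: "a = - t * (\<bar>b\<bar> + 1)"
    using \<open>a \<noteq> 0\<close> by (simp_all add: t_def add_pos_nonneg)
  have "a * t + b * t\<^sup>2 = t\<^sup>2 * (b - \<bar>b\<bar> - 1)"
    unfolding a_eq by (simp add: power2_eq_square algebra_simps)
  also have "\<dots> < 0"
    using \<open>t \<noteq> 0\<close> by (intro mult_pos_neg) auto
  finally show False
    using nonneg[of t] by simp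
qed

lemma inner_symmetric_matrix_vector:
  fixes M :: "real^'n^'n"
  assumes "transpose M = M"
  shows "x \<bullet> (M *v y) = (M *v x) \<bullet> y"
  by (metis assms dot_lmul_matrix transpose_matrix_vector)

lemma rayleigh_minimizer_is_eigenvector:
  fixes M :: "real^'n^'n"
  assumes sym: "transpose M = M"
    and form_ge: "\<And>x. \<mu> * (x \<bullet> x) \<le> x \<bullet> (M *v x)"
    and attained: "u \<bullet> (M *v u) = \<mu> * (u \<bullet> u)"
  shows "M *v u = \<mu> *\<^sub>R u"
proof -
  define r where "r = M *v u - \<mu> *\<^sub>R u"
  have "0 \<le> (2 * (r \<bullet> r)) * t + (r \<bullet> (M *v r) - \<mu> * (r \<bullet> r)) * t\<^sup>2" for t
  proof -
    let ?x = "u + t *\<^sub>R r"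
    have "u \<bullet> (M *v r) = (M *v u) \<bullet> r"
      by (rule inner_symmetric_matrix_vector[OF sym])
    hence "?x \<bullet> (M *v ?x) - \<mu> * (?x \<bullet> ?x)
        = (2 * (r \<bullet> r)) * t + (r \<bullet> (M *v r) - \<mu> * (r \<bullet> r)) * t\<^sup>2"
      using attained
      by (simp add: r_def matrix_vector_right_distrib matrix_vector_mult_scaleR inner_add_left
          inner_add_right inner_diff_left inner_diff_right inner_commute power2_eq_square algebra_simps)
    thus ?thesis
      using form_ge[of ?x] by linarith
  qed
  hence "2 * (r \<bullet> r) = 0"
    by (rule quadratic_nonneg_imp_linear_coeff_zero)
  thus ?thesis
    by (simp add: r_def)
qed

lemma rayleigh_quotient_attains_min:
  fixes M :: "real^'n^'n"
  obtains u where "norm u = 1" and "\<And>x. (u \<bullet> (M *v u)) * (x \<bullet> x) \<le> x \<bullet> (M *v x)"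
proof -
  let ?Q = "\<lambda>x::real^'n. x \<bullet> (M *v x)"
  have "continuous_on (sphere 0 1) ?Q"
    by (intro continuous_intros matrix_vector_mult_linear_continuous_on[THEN continuous_on_compose2])
      auto
  moreover have "sphere (0::real^'n) 1 \<noteq> {}"
    by simp
  ultimately obtain u where u: "u \<in> sphere 0 1"
    and umin: "\<And>y. y \<in> sphere 0 1 \<Longrightarrow> ?Q u \<le> ?Q y"
    using continuous_attains_inf[OF compact_sphere] by blast
  have "?Q u * (x \<bullet> x) \<le> ?Q x" for x
  proof (cases "x = 0")
    case False
    have "?Q u \<le> ?Q ((1 / norm x) *\<^sub>R x)"
      using False by (intro umin) simp
    also have "\<dots> = ?Q x / (norm x)\<^sup>2"
      by (simp add: matrix_vector_mult_scaleR power2_eq_square)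
    finally show ?thesis
      using False by (simp add: field_simps dot_square_norm)
  qed simp
  with u show thesis
    using that by simp
qed

lemma finite_eigenvalues_symmetric:
  fixes M :: "real^'n^'n"
  assumes sym: "transpose M = M"
  shows "finite {c. is_eigenvalue M c}"
proof -
  let ?E = "{c. is_eigenvalue M c}"
  define v where "v c = (SOME v. v \<noteq> 0 \<and> M *v v = c *\<^sub>R v)" for c
  have v: "v c \<noteq> 0" "M *v v c = c *\<^sub>R v c" if "c \<in> ?E" for c
    using that someI_ex[of "\<lambda>v. v \<noteq> 0 \<and> M *v v = c *\<^sub>R v"]
    unfolding v_def is_eigenvalue_def by auto
  have orth: "v c \<bullet> v d = 0" if "c \<in> ?E" "d \<in> ?E" "c \<noteq> d" for c d
  proof -
    have "c * (v c \<bullet> v d) = (M *v v c) \<bullet> v d"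
      using v(2)[OF that(1)] by simp
    also have "\<dots> = v c \<bullet> (M *v v d)"
      by (rule inner_symmetric_matrix_vector[OF sym, symmetric])
    also have "\<dots> = d * (v c \<bullet> v d)"
      using v(2)[OF that(2)] by simp
    finally show ?thesis
      using that(3) by (simp add: algebra_simps)
  qed
  have "inj_on v ?E"
  proof (rule inj_onI)
    fix c d
    assume "c \<in> ?E" "d \<in> ?E" "v c = v d"
    thus "c = d"
      using orth[of c d] v(1)[of c] by auto
  qed
  moreover have "finite (v ` ?E)"
    using orth v(1)
    by (intro finiteI_independent pairwise_orthogonal_independent)
      (auto simp: pairwise_def orthogonal_def)
  ultimately show ?thesis
    using finite_imageD by blast
qed

lemma least_eigenvalue_le_rayleigh:
  fixes M :: "real^'n^'n"
  assumes sym: "transpose M = M"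
  shows "least_eigenvalue M * (x \<bullet> x) \<le> x \<bullet> (M *v x)"
proof -
  obtain u where u: "norm u = 1"
    and form_ge: "\<And>x. (u \<bullet> (M *v u)) * (x \<bullet> x) \<le> x \<bullet> (M *v x)"
    using rayleigh_quotient_attains_min[of M] by blast
  define \<mu> where "\<mu> = u \<bullet> (M *v u)"
  have "u \<bullet> u = 1"
    using u by (simp add: dot_square_norm)
  hence "M *v u = \<mu> *\<^sub>R u"
    using sym form_ge by (intro rayleigh_minimizer_is_eigenvector) (simp_all add: \<mu>_def)
  hence "is_eigenvalue M \<mu>"
    using u unfolding is_eigenvalue_def by (intro exI[of _ u]) auto
  moreover have "\<mu> \<le> c" if eigen: "is_eigenvalue M c" for c
  proof -
    obtain w where "w \<noteq> 0" and "M *v w = c *\<^sub>R w"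
      using eigen unfolding is_eigenvalue_def by blast
    hence "\<mu> * (w \<bullet> w) \<le> c * (w \<bullet> w)"
      using form_ge[of w] by (simp add: \<mu>_def)
    thus ?thesis
      using \<open>w \<noteq> 0\<close> by (simp add: mult_le_cancel_right)
  qed
  ultimately have "least_eigenvalue M = \<mu>"
    unfolding least_eigenvalue_def using finite_eigenvalues_symmetric[OF sym] by (intro Min_eqI) auto
  thus ?thesis
    using form_ge by (simp add: \<mu>_def)
qed

definition indicator_vec :: "'n set \<Rightarrow> real^'n::finite" where
  "indicator_vec T = (\<chi> i. if i \<in> T then 1 else 0)"

lemma inner_indicator_vec_left: "indicator_vec T \<bullet> v = (\<Sum>i\<in>T. v $ i)"
  by (simp add: indicator_vec_def inner_vec_def if_distrib[of "\<lambda>x. x * _"] sum.If_cases)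

lemma inner_indicator_vec_indicator_vec:
  "indicator_vec T \<bullet> indicator_vec U = real (card (T \<inter> U))"
  unfolding inner_indicator_vec_left by (simp add: indicator_vec_def sum.If_cases)

lemma inner_indicator_vec_adj_matrix:
  "indicator_vec T \<bullet> (adj_matrix E *v indicator_vec U) = (\<Sum>i\<in>T. real (card {j\<in>U. E i j}))"
proof -
  have "(adj_matrix E *v indicator_vec U) $ i = real (card {j\<in>U. E i j})" for i
    by (simp add: adj_matrix_def indicator_vec_def matrix_vector_mult_def
        if_distrib[of "\<lambda>x. x * _"] sum.If_cases Collect_conj_eq Int_commute)
  thus ?thesis
    by (simp add: inner_indicator_vec_left)
qed

lemma adj_matrix_symmetric:
  assumes "\<And>i j. E i j \<longleftrightarrow> E j i"
  shows "transpose (adj_matrix E) = adj_matrix E"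
  using assms by (simp add: adj_matrix_def transpose_def vec_eq_iff)

lemma independent_set_inner_adj_matrix:
  assumes "independent_set E S"
  shows "indicator_vec S \<bullet> (adj_matrix E *v indicator_vec S) = real (card {i\<in>S. E i i})"
proof -
  have "{j\<in>S. E i j} = (if E i i then {i} else {})" if "i \<in> S" for i
    using assms that unfolding independent_set_def by auto
  hence "(\<Sum>i\<in>S. real (card {j\<in>S. E i j})) = (\<Sum>i\<in>S. if E i i then 1 else 0)"
    by (intro sum.cong) auto
  thus ?thesis
    by (simp add: inner_indicator_vec_adj_matrix sum.If_cases Collect_conj_eq Int_commute)
qed

lemma independent_set_quadratic_form_bound:
  fixes E :: "'n::finite \<Rightarrow> 'n \<Rightarrow> bool" and \<alpha> :: real
  assumes sym: "\<And>i j. E i j \<longleftrightarrow> E j i" and indep: "independent_set E S"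
  shows "least_eigenvalue (adj_matrix E)
           * (real (card S) - 2 * \<alpha> * real (card S) + \<alpha>\<^sup>2 * real CARD('n))
         \<le> real (card {i\<in>S. E i i}) - 2 * \<alpha> * (\<Sum>i\<in>S. real (degree E i))
           + \<alpha>\<^sup>2 * (\<Sum>i\<in>UNIV. real (degree E i))"
proof -
  let ?A = "adj_matrix E" and ?\<chi> = "indicator_vec S" and ?one = "indicator_vec UNIV"
  let ?x = "?\<chi> - \<alpha> *\<^sub>R ?one"
  have A_sym: "transpose ?A = ?A"
    using sym by (rule adj_matrix_symmetric)
  have "?one \<bullet> (?A *v ?\<chi>) = ?\<chi> \<bullet> (?A *v ?one)"
    using inner_symmetric_matrix_vector[OF A_sym, of ?one ?\<chi>] by (simp add: inner_commute)
  hence "?x \<bullet> (?A *v ?x) = real (card {i\<in>S. E i i}) - 2 * \<alpha> * (\<Sum>i\<in>S. real (degree E i))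
           + \<alpha>\<^sup>2 * (\<Sum>i\<in>UNIV. real (degree E i))"
    using independent_set_inner_adj_matrix[OF indep]
    by (simp add: matrix_vector_mult_diff_distrib matrix_vector_mult_scaleR inner_diff_left
        inner_diff_right inner_indicator_vec_adj_matrix degree_def power2_eq_square algebra_simps)
  moreover have "?x \<bullet> ?x = real (card S) - 2 * \<alpha> * real (card S) + \<alpha>\<^sup>2 * real CARD('n)"
    by (simp add: inner_diff_left inner_diff_right inner_indicator_vec_indicator_vec inner_commute
        power2_eq_square algebra_simps)
  ultimately show ?thesis
    using least_eigenvalue_le_rayleigh[OF A_sym, of ?x] by simp
qed

theorem corollary3p4:
  fixes E :: "'n::finite \<Rightarrow> 'n \<Rightarrow> bool" and S :: "'n set"
  assumes sym: "\<And>i j. E i j \<longleftrightarrow> E j i"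
    and indep: "independent_set E S"
    and s_pos: "card S \<ge> 1"
    and kS_gt: "let n = real CARD('n); s = real (card S);
                  dS = (\<Sum>i\<in>S. real (degree E i)) / s;
                  kS = 2 * dS - (\<Sum>i\<in>UNIV. real (degree E i)) / n;
                  \<tau> = least_eigenvalue (adj_matrix E)
                in kS > \<tau>"
  shows "let n = real CARD('n); s = real (card S);
             s1 = real (card {i\<in>S. E i i});
             dS = (\<Sum>i\<in>S. real (degree E i)) / s;
             kS = 2 * dS - (\<Sum>i\<in>UNIV. real (degree E i)) / n;
             \<tau> = least_eigenvalue (adj_matrix E)
         in s \<le> n * (- \<tau> + sqrt (\<tau>\<^sup>2 + 4 * s1 * (kS - \<tau>) / n)) / (2 * (kS - \<tau>))"
proof -
  define n where "n = real CARD('n)"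
  define s where "s = real (card S)"
  define s1 where "s1 = real (card {i\<in>S. E i i})"
  define P where "P = (\<Sum>i\<in>S. real (degree E i))"
  define D where "D = (\<Sum>i\<in>UNIV. real (degree E i))"
  define \<tau> where "\<tau> = least_eigenvalue (adj_matrix E)"
  define K where "K = 2 * (P / s) - D / n - \<tau>"
  have "n > 0" and "s > 0"
    using s_pos by (simp_all add: n_def s_def)
  have "K > 0"
    using kS_gt by (simp add: Let_def K_def n_def s_def P_def D_def \<tau>_def)
  have "\<tau> * (s - 2 * (s / n) * s + (s / n)\<^sup>2 * n) \<le> s1 - 2 * (s / n) * P + (s / n)\<^sup>2 * D"
    unfolding n_def s_def s1_def P_def D_def \<tau>_def
    by (rule independent_set_quadratic_form_bound[OF sym indep])
  moreover have "n * (K * (s / n)\<^sup>2 + \<tau> * (s / n) - s1 / n)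
      = \<tau> * (s - 2 * (s / n) * s + (s / n)\<^sup>2 * n) - (s1 - 2 * (s / n) * P + (s / n)\<^sup>2 * D)"
    using \<open>n > 0\<close> \<open>s > 0\<close> by (simp add: K_def field_simps power2_eq_square)
  ultimately have "n * (K * (s / n)\<^sup>2 + \<tau> * (s / n) - s1 / n) \<le> 0"
    by linarith
  hence "K * (s / n)\<^sup>2 + \<tau> * (s / n) \<le> s1 / n"
    using \<open>n > 0\<close> by (simp add: mult_le_0_iff)
  hence "s / n \<le> (- \<tau> + sqrt (\<tau>\<^sup>2 + 4 * K * (s1 / n))) / (2 * K)"
    by (rule quadratic_le_imp_le_root[OF \<open>K > 0\<close>])
  hence "s \<le> n * (- \<tau> + sqrt (\<tau>\<^sup>2 + 4 * s1 * K / n)) / (2 * K)"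
    using \<open>n > 0\<close> by (simp add: divide_le_eq mult_ac)
  thus ?thesis
    by (simp add: Let_def K_def n_def s_def s1_def P_def D_def \<tau>_def)
qed
end
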